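(* Let $\mathbf{C}\in\mathbb{R}^{n\times n}$, let $\mathbf{X}=\mathbf{C}^\top\mathbf{C}$, and let $\Pi$ be any participation schema. For $\pi\in\Pi$, let $\mathbf{P}_\pi$ be the diagonal $0/1$ matrix with $\mathbf{P}_\pi[i,i]=1$ if and only if $i\in\pi$. Then the squared sensitivity satisfies $$\mathrm{sens}_\Pi(\mathbf{C})^2=\max_{\pi\in\Pi}\ \sup_{\mathbf{u}\in\mathfrak{D}}\ \mathrm{tr}\big([\mathbf{P}_\pi\mathbf{C}^\top\mathbf{C}\mathbf{P}_\pi][\mathbf{u}\mathbf{u}^\top]\big).$$ Moreover, since every $\mathbf{u}\in\mathfrak{D}$ has rows of $\ell_2$ norm at most $1$, $$\mathrm{sens}_\Pi(\mathbf{C})^2\le\max_{\pi\in\Pi}\sum_{i,j\in\pi}|\mathbf{X}_{[i,j]}|.$$ This upper bound holds with equality whenever $\mathbf{P}_\pi\mathbf{C}^\top\mathbf{C}\mathbf{P}_\pi$ is entrywise nonnegative for all $\pi\in\Pi$. These statements hold independently of the row dimension $d$.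
   Context: A participation schema $\Pi$ is a set of subsets $\pi\subseteq[n]=\{1,\dots,n\}$ (the sets of steps in which one example may participate). $\mathfrak{D}$ is the set of all $\mathbf{u}\in\mathbb{R}^{n\times d}$ whose rows have $\ell_2$ norm at most $1$ and whose nonzero-row indices are contained in some $\pi\in\Pi$. The sensitivity of $\mathbf{C}$ is $\mathrm{sens}_\Pi(\mathbf{C})=\sup_{\mathbf{u}\in\mathfrak{D}}\|\mathbf{C}\mathbf{u}\|_F$. *)

theory Defs
  imports "HOL-Analysis.Analysis"
begin

text \<open>Steps [n] are modelled by the finite type 'n; the row dimension d by the finite type 'd.
  A matrix in R^(n x d) is a value of type real^'d^'n (row i is u $ i).\<close>

definition frob_norm :: "real^'d^'n \<Rightarrow> real" where
  "frob_norm A = sqrt (\<Sum>i\<in>UNIV. \<Sum>j\<in>UNIV. (A $ i $ j)^2)"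

definition adm :: "'n set set \<Rightarrow> (real^'d^'n) set" where
  "adm Sch = {u. (\<forall>i. norm (u $ i) \<le> 1) \<and> (\<exists>p\<in>Sch. {i. u $ i \<noteq> 0} \<subseteq> p)}"

definition sens :: "'d::finite itself \<Rightarrow> ('n::finite) set set \<Rightarrow> real^'n^'n \<Rightarrow> real" where
  "sens _ Sch C = Sup ((\<lambda>u::real^'d^'n. frob_norm (C ** u)) ` adm Sch)"

definition proj_mat :: "'n set \<Rightarrow> real^'n^'n" where
  "proj_mat p = (\<chi> i j. if i = j \<and> i \<in> p then 1 else 0)"

end

theory Submission imports Defs begin

(* Writing X = C^T C, the Gram identity  |C u|_F^2 = sum_{i,j} X_ij <u_i, u_j>  turns the objective
   into a quadratic form in the rows of u. For u supported in p this equals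
   tr(P_p X P_p u u^T), and projecting an admissible u onto p keeps it admissible, which gives the
   first formula. Cauchy-Schwarz bounds each |<u_i, u_j>| by 1, and if X is entrywise nonnegative
   on p x p the bound is attained by letting every row indexed by p be one and the same unit vector. *)

lemma frob_norm_nonneg: "0 \<le> frob_norm A"
  unfolding frob_norm_def by (simp add: sum_nonneg)

lemma frob_norm_sq_eq_sum_rows: "frob_norm A ^ 2 = (\<Sum>i\<in>UNIV. norm (A $ i) ^ 2)"
  unfolding frob_norm_def power2_norm_eq_inner inner_vec_def by (simp add: sum_nonneg power2_eq_square)

lemma matrix_matrix_mult_row: "(A ** u) $ r = (\<Sum>i\<in>UNIV. A $ r $ i *\<^sub>R u $ i)"
  by (simp add: vec_eq_iff matrix_matrix_mult_def sum_component)

lemma frob_norm_mult_sq_gram: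
  fixes C :: "real^'n^'m" and u :: "real^'d^'n"
  shows "frob_norm (C ** u) ^ 2 = (\<Sum>i\<in>UNIV. \<Sum>j\<in>UNIV. (transpose C ** C) $ i $ j * (u $ i \<bullet> u $ j))"
proof -
  have "frob_norm (C ** u) ^ 2
      = (\<Sum>r\<in>UNIV. \<Sum>i\<in>UNIV. \<Sum>j\<in>UNIV. C $ r $ i * (C $ r $ j * (u $ j \<bullet> u $ i)))"
    by (simp add: frob_norm_sq_eq_sum_rows matrix_matrix_mult_row power2_norm_eq_inner
        inner_sum_left inner_sum_right sum_distrib_left)
  also have "\<dots> = (\<Sum>i\<in>UNIV. \<Sum>j\<in>UNIV. \<Sum>r\<in>UNIV. C $ r $ i * (C $ r $ j * (u $ j \<bullet> u $ i)))"
    by (subst sum.swap, rule sum.cong[OF refl], rule sum.swap)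
  also have "\<dots> = (\<Sum>i\<in>UNIV. \<Sum>j\<in>UNIV. (transpose C ** C) $ i $ j * (u $ i \<bullet> u $ j))"
    by (simp add: matrix_matrix_mult_def transpose_def sum_distrib_right mult.assoc
        inner_commute[of "u $ i" "u $ j" for i j])
  finally show ?thesis .
qed

lemma frob_norm_mult_sq_gram_supported:
  fixes C :: "real^'n^'m" and u :: "real^'d^'n"
  assumes "{i. u $ i \<noteq> 0} \<subseteq> p"
  shows "frob_norm (C ** u) ^ 2 = (\<Sum>i\<in>p. \<Sum>j\<in>p. (transpose C ** C) $ i $ j * (u $ i \<bullet> u $ j))"
proof -
  have zero_outside: "i \<notin> p \<Longrightarrow> u $ i = 0" for i
    using assms by auto
  have "(\<Sum>i\<in>UNIV. \<Sum>j\<in>UNIV. (transpose C ** C) $ i $ j * (u $ i \<bullet> u $ j))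
      = (\<Sum>i\<in>UNIV. \<Sum>j\<in>p. (transpose C ** C) $ i $ j * (u $ i \<bullet> u $ j))"
    using zero_outside by (intro sum.cong refl sum.mono_neutral_right) auto
  also have "\<dots> = (\<Sum>i\<in>p. \<Sum>j\<in>p. (transpose C ** C) $ i $ j * (u $ i \<bullet> u $ j))"
    using zero_outside by (intro sum.mono_neutral_right) auto
  finally show ?thesis
    by (simp add: frob_norm_mult_sq_gram)
qed

lemma frob_norm_mult_sq_le_abs_sum:
  fixes C :: "real^'n^'m" and u :: "real^'d^'n"
  assumes "\<And>i. norm (u $ i) \<le> 1" and "{i. u $ i \<noteq> 0} \<subseteq> p"
  shows "frob_norm (C ** u) ^ 2 \<le> (\<Sum>i\<in>p. \<Sum>j\<in>p. \<bar>(transpose C ** C) $ i $ j\<bar>)"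
proof -
  have "x * (u $ i \<bullet> u $ j) \<le> \<bar>x\<bar>" for x :: real and i j
  proof -
    have "\<bar>u $ i \<bullet> u $ j\<bar> \<le> norm (u $ i) * norm (u $ j)"
      by (rule Cauchy_Schwarz_ineq2)
    also have "\<dots> \<le> 1"
      using assms(1) by (intro mult_le_one) auto
    finally have "\<bar>x\<bar> * \<bar>u $ i \<bullet> u $ j\<bar> \<le> \<bar>x\<bar>"
      by (intro mult_left_le) auto
    then show ?thesis
      by (metis abs_ge_self abs_mult order_trans)
  qed
  then show ?thesis
    unfolding frob_norm_mult_sq_gram_supported[OF assms(2)] by (intro sum_mono)
qed

lemma frob_norm_mult_sq_constant_rows:
  fixes C :: "real^'n^'m" and e :: "real^'d"
  assumes "norm e = 1"
  shows "frob_norm (C ** (\<chi> i. if i \<in> p then e else 0)) ^ 2 = (\<Sum>i\<in>p. \<Sum>j\<in>p. (transpose C ** C) $ i $ j)"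
proof -
  have "e \<bullet> e = 1"
    using assms by (simp add: dot_square_norm)
  then show ?thesis
    by (subst frob_norm_mult_sq_gram_supported[where p = p]) auto
qed

lemma proj_mat_mult_left: "(proj_mat p ** (A::real^'m^'n)) $ i $ j = (if i \<in> p then A $ i $ j else 0)"
  by (simp add: proj_mat_def matrix_matrix_mult_def if_distrib[of "\<lambda>x. x * _"] cong: if_cong)

lemma proj_mat_mult_right: "((A::real^'n^'m) ** proj_mat p) $ i $ j = (if j \<in> p then A $ i $ j else 0)"
proof -
  have "(\<Sum>k\<in>UNIV. A $ i $ k * (if k = j \<and> k \<in> p then 1 else 0))
      = (\<Sum>k\<in>UNIV. if k = j then A $ i $ k * (if j \<in> p then 1 else 0) else 0)"
    by (intro sum.cong) auto
  then show ?thesis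
    by (simp add: proj_mat_def matrix_matrix_mult_def)
qed

lemma proj_mat_mult_row: "(proj_mat p ** (u::real^'d^'n)) $ i = (if i \<in> p then u $ i else 0)"
  by (simp add: vec_eq_iff proj_mat_mult_left)

lemma proj_mat_mult_eq_self: "{i. u $ i \<noteq> 0} \<subseteq> p \<Longrightarrow> proj_mat p ** (u::real^'d^'n) = u"
  by (auto simp: vec_eq_iff proj_mat_mult_row)

lemma proj_mat_compression_entry:
  fixes C :: "real^'n^'m"
  shows "(proj_mat p ** transpose C ** C ** proj_mat p) $ i $ j
       = (if i \<in> p \<and> j \<in> p then (transpose C ** C) $ i $ j else 0)"
  by (simp add: matrix_mul_assoc[of "proj_mat p", symmetric] proj_mat_mult_left proj_mat_mult_right)

lemma trace_mult_outer:
  fixes M :: "real^'n^'n" and u :: "real^'d^'n"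
  shows "trace (M ** (u ** transpose u)) = (\<Sum>i\<in>UNIV. \<Sum>j\<in>UNIV. M $ i $ j * (u $ i \<bullet> u $ j))"
  by (simp add: trace_def matrix_matrix_mult_def transpose_def inner_vec_def sum_distrib_left
      mult.commute[of "u $ i $ k" "u $ j $ k" for i j k])

lemma trace_compression_outer:
  fixes C :: "real^'n^'m" and u :: "real^'d^'n"
  shows "trace ((proj_mat p ** transpose C ** C ** proj_mat p) ** (u ** transpose u))
       = frob_norm (C ** (proj_mat p ** u)) ^ 2"
  unfolding trace_mult_outer frob_norm_mult_sq_gram proj_mat_compression_entry proj_mat_mult_row
  by (intro sum.cong refl) auto

lemma zero_in_adm: "Sch \<noteq> {} \<Longrightarrow> 0 \<in> adm Sch"
  unfolding adm_def by auto

lemma proj_mat_mult_in_adm: "u \<in> adm Sch \<Longrightarrow> proj_mat p ** u \<in> adm Sch"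
  unfolding adm_def by (auto simp: proj_mat_mult_row)

lemma bdd_above_frob_norm_adm:
  fixes C :: "real^'n^'m"
  shows "bdd_above ((\<lambda>u::real^'d^'n. frob_norm (C ** u)) ` adm Sch)"
proof (rule bdd_aboveI2)
  fix u :: "real^'d^'n"
  assume "u \<in> adm Sch"
  then have "frob_norm (C ** u) ^ 2 \<le> (\<Sum>i\<in>UNIV. \<Sum>j\<in>UNIV. \<bar>(transpose C ** C) $ i $ j\<bar>)"
    unfolding adm_def by (intro frob_norm_mult_sq_le_abs_sum) auto
  then show "frob_norm (C ** u) \<le> sqrt (\<Sum>i\<in>UNIV. \<Sum>j\<in>UNIV. \<bar>(transpose C ** C) $ i $ j\<bar>)"
    by (rule real_le_rsqrt)
qed

lemma frob_norm_le_sens: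
  fixes C :: "real^'n^'n" and u :: "real^'d^'n"
  assumes "u \<in> adm Sch"
  shows "frob_norm (C ** u) \<le> sens TYPE('d) Sch C"
  unfolding sens_def using assms bdd_above_frob_norm_adm by (intro cSup_upper) auto

lemma frob_norm_sq_le_sens_sq:
  fixes C :: "real^'n^'n" and u :: "real^'d^'n"
  assumes "u \<in> adm Sch"
  shows "frob_norm (C ** u) ^ 2 \<le> (sens TYPE('d) Sch C) ^ 2"
  using assms by (intro power_mono frob_norm_le_sens frob_norm_nonneg)

lemma sens_sq_le:
  fixes C :: "real^'n^'n"
  assumes "Sch \<noteq> {}" and bound: "\<And>u::real^'d^'n. u \<in> adm Sch \<Longrightarrow> frob_norm (C ** u) ^ 2 \<le> M"
  shows "(sens TYPE('d) Sch C) ^ 2 \<le> M"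
proof -
  have zero: "(0::real^'d^'n) \<in> adm Sch"
    using assms(1) by (rule zero_in_adm)
  have "sens TYPE('d) Sch C \<le> sqrt M"
    unfolding sens_def using zero bound by (intro cSup_least) (auto intro: real_le_rsqrt)
  moreover have "0 \<le> sens TYPE('d) Sch C"
    using frob_norm_nonneg frob_norm_le_sens[OF zero] by (rule order_trans)
  moreover have "0 \<le> M"
    using zero_le_power2 bound[OF zero] by (rule order_trans)
  ultimately show ?thesis
    by (metis power_mono real_sqrt_pow2)
qed

lemma sens_sq_eq_Max_Sup_trace_compression:
  fixes C :: "real^'n^'n" and Sch :: "'n set set"
  assumes "Sch \<noteq> {}"
  shows "(sens TYPE('d) Sch C) ^ 2 = Max ((\<lambda>p. Sup ((\<lambda>u::real^'d^'n.
           trace ((proj_mat p ** transpose C ** C ** proj_mat p) ** (u ** transpose u))) ` adm Sch)) ` Sch)"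
    (is "?s ^ 2 = Max ((\<lambda>p. Sup (?T p)) ` Sch)")
proof (rule antisym)
  have T_le: "t \<le> ?s ^ 2" if "t \<in> ?T p" for p t
    using that by (auto simp: trace_compression_outer intro: frob_norm_sq_le_sens_sq proj_mat_mult_in_adm)
  have T_nonempty: "?T p \<noteq> {}" for p
    using zero_in_adm[OF assms] by blast
  show "?s ^ 2 \<le> Max ((\<lambda>p. Sup (?T p)) ` Sch)"
  proof (rule sens_sq_le[OF assms])
    fix u :: "real^'d^'n"
    assume u: "u \<in> adm Sch"
    then obtain p where "p \<in> Sch" and supp: "{i. u $ i \<noteq> 0} \<subseteq> p"
      unfolding adm_def by blast
    have "frob_norm (C ** u) ^ 2 = trace ((proj_mat p ** transpose C ** C ** proj_mat p) ** (u ** transpose u))"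
      by (simp add: trace_compression_outer proj_mat_mult_eq_self[OF supp])
    also have "\<dots> \<le> Sup (?T p)"
      using u T_le by (intro cSup_upper bdd_aboveI) auto
    also have "\<dots> \<le> Max ((\<lambda>p. Sup (?T p)) ` Sch)"
      using \<open>p \<in> Sch\<close> by (intro Max_ge) auto
    finally show "frob_norm (C ** u) ^ 2 \<le> Max ((\<lambda>p. Sup (?T p)) ` Sch)" .
  qed
  show "Max ((\<lambda>p. Sup (?T p)) ` Sch) \<le> ?s ^ 2"
    using assms T_nonempty T_le by (auto intro!: Max.boundedI cSup_least)
qed

lemma sens_sq_le_Max_abs_sum:
  fixes C :: "real^'n^'n" and Sch :: "'n set set"
  assumes "Sch \<noteq> {}"
  shows "(sens TYPE('d::finite) Sch C) ^ 2 \<le> Max ((\<lambda>p. \<Sum>i\<in>p. \<Sum>j\<in>p. \<bar>(transpose C ** C) $ i $ j\<bar>) ` Sch)"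
proof (rule sens_sq_le[OF assms])
  fix u :: "real^'d^'n"
  assume "u \<in> adm Sch"
  then obtain p where "p \<in> Sch" "{i. u $ i \<noteq> 0} \<subseteq> p" "\<And>i. norm (u $ i) \<le> 1"
    unfolding adm_def by blast
  then show "frob_norm (C ** u) ^ 2 \<le> Max ((\<lambda>p. \<Sum>i\<in>p. \<Sum>j\<in>p. \<bar>(transpose C ** C) $ i $ j\<bar>) ` Sch)"
    by (intro order_trans[OF frob_norm_mult_sq_le_abs_sum Max_ge]) auto
qed

lemma Max_abs_sum_le_sens_sq_if_nonneg:
  fixes C :: "real^'n^'n" and Sch :: "'n set set"
  assumes "Sch \<noteq> {}"
    and nonneg: "\<forall>p\<in>Sch. \<forall>i j. (proj_mat p ** transpose C ** C ** proj_mat p) $ i $ j \<ge> 0"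
  shows "Max ((\<lambda>p. \<Sum>i\<in>p. \<Sum>j\<in>p. \<bar>(transpose C ** C) $ i $ j\<bar>) ` Sch) \<le> (sens TYPE('d::finite) Sch C) ^ 2"
proof (rule Max.boundedI)
  fix s
  assume "s \<in> (\<lambda>p. \<Sum>i\<in>p. \<Sum>j\<in>p. \<bar>(transpose C ** C) $ i $ j\<bar>) ` Sch"
  then obtain p where p: "p \<in> Sch" and s: "s = (\<Sum>i\<in>p. \<Sum>j\<in>p. \<bar>(transpose C ** C) $ i $ j\<bar>)"
    by blast
  obtain e :: "real^'d" where e: "norm e = 1"
    using vector_choose_size[of 1] by auto
  have "0 \<le> (transpose C ** C) $ i $ j" if "i \<in> p" "j \<in> p" for i j
    using nonneg p that proj_mat_compression_entry[of p C i j] by (metis (mono_tags))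
  then have "s = (\<Sum>i\<in>p. \<Sum>j\<in>p. (transpose C ** C) $ i $ j)"
    unfolding s by (intro sum.cong refl) auto
  also have "\<dots> = frob_norm (C ** (\<chi> i. if i \<in> p then e else 0)) ^ 2"
    using e by (rule frob_norm_mult_sq_constant_rows[symmetric])
  also have "\<dots> \<le> (sens TYPE('d) Sch C) ^ 2"
    using p e by (intro frob_norm_sq_le_sens_sq) (auto simp: adm_def)
  finally show "s \<le> (sens TYPE('d) Sch C) ^ 2" .
qed (use assms in auto)

theorem proposition3:
  fixes C :: "real^'n^'n" and Sch :: "'n set set"
  assumes "Sch \<noteq> {}"
  defines "X \<equiv> transpose C ** C"
  shows "(sens TYPE('d::finite) Sch C)^2 =
           Max ((\<lambda>p. Sup ((\<lambda>u::real^'d^'n.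
              trace ((proj_mat p ** transpose C ** C ** proj_mat p) ** (u ** transpose u))) ` adm Sch)) ` Sch)
     \<and> (sens TYPE('d) Sch C)^2 \<le> Max ((\<lambda>p. \<Sum>i\<in>p. \<Sum>j\<in>p. \<bar>X $ i $ j\<bar>) ` Sch)
     \<and> ((\<forall>p\<in>Sch. \<forall>i j. (proj_mat p ** transpose C ** C ** proj_mat p) $ i $ j \<ge> 0) \<longrightarrow>
         (sens TYPE('d) Sch C)^2 = Max ((\<lambda>p. \<Sum>i\<in>p. \<Sum>j\<in>p. \<bar>X $ i $ j\<bar>) ` Sch))"
  unfolding X_def
  using sens_sq_eq_Max_Sup_trace_compression[OF assms(1)] sens_sq_le_Max_abs_sum[OF assms(1)]
    Max_abs_sum_le_sens_sq_if_nonneg[OF assms(1)]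
  by (auto intro: antisym)

end
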